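(* Let $d\ge2$, let $(c_t)_{t=0}^\infty\subset\mathbb{S}^{d-1}$ be a sequence of unit vectors and let $\omega:\mathsf{P}^d_+\to\mathbb{R}_{\ge0}$ be a function such that $\omega(X)\le C\sqrt{\lambda_{\max}(X)}$ for all $X\in\mathsf{P}^d_+$, for some constant $C>0$. Let $\lambda_0\ge\max\Big\{2,\ \sqrt{\tfrac{2}{3(d-1)}}\,2dC+\tfrac{2}{3(d-1)}\Big\}$ and define matrices $V_t\in\mathbb{R}^{d\times d}$ by $$V_0=\lambda_0\mathbb{I}_{d\times d},\qquad V_{t+1}=V_t+\omega(V_t)\sum_{i=1}^{d-1}P_{t,i},$$ where $P_{t,i}=a^+_{t+1,i}(a^+_{t+1,i})^{\mathsf T}+a^-_{t+1,i}(a^-_{t+1,i})^{\mathsf T}$, $a^\pm_{t+1,i}=\tilde a^\pm_{t+1,i}/\|\tilde a^\pm_{t+1,i}\|_2$, $\tilde a^\pm_{t+1,i}=c_t\pm\frac{1}{\sqrt{\lambda_{t,1}}}v_{t,i}$, and $\lambda_{t,1}\le\lambda_{t,2}\le\dots\le\lambda_{t,d}$ are the eigenvalues of $V_t$ with corresponding orthonormal eigenvectors $v_{t,1},\dots,v_{t,d}$. Then $$\lambda_{\min}(V_t)\ge\sqrt{\frac{2}{3(d-1)}\lambda_{\max}(V_t)}\qquad\text{for all }t\ge0.$$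
   Context: $\mathsf{P}^d_+$ is the set of real positive semidefinite $d\times d$ matrices; $\lambda_{\min}$, $\lambda_{\max}$ denote minimal and maximal eigenvalue; $\mathbb{S}^{d-1}$ is the unit sphere of $\mathbb{R}^d$. *)

theory Defs
  imports "HOL-Analysis.Analysis"
begin

definition psd :: "real^'n^'n \<Rightarrow> bool" where
  "psd X \<longleftrightarrow> transpose X = X \<and> (\<forall>x. 0 \<le> x \<bullet> (X *v x))"

definition eigvals :: "real^'n^'n \<Rightarrow> real set" where
  "eigvals X = {\<mu>. \<exists>v. v \<noteq> 0 \<and> X *v v = \<mu> *\<^sub>R v}"

definition lambda_max :: "real^'n^'n \<Rightarrow> real" where
  "lambda_max X = Max (eigvals X)"

definition lambda_min :: "real^'n^'n \<Rightarrow> real" where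
  "lambda_min X = Min (eigvals X)"

definition outer :: "real^'n \<Rightarrow> real^'n^'n" where
  "outer a = (\<chi> i j. a $ i * a $ j)"

definition normalize_vec :: "real^'n \<Rightarrow> real^'n" where
  "normalize_vec x = (1 / norm x) *\<^sub>R x"

text \<open>P_{t,i} built from c_t, the smallest eigenvalue lambda_{t,1} and eigenvector v_{t,i}.\<close>
definition Pmat :: "real^'n \<Rightarrow> real \<Rightarrow> real^'n \<Rightarrow> real^'n^'n" where
  "Pmat c l1 w =
     outer (normalize_vec (c + (1 / sqrt l1) *\<^sub>R w)) +
     outer (normalize_vec (c - (1 / sqrt l1) *\<^sub>R w))"

end

(*
  Work with Rayleigh quotients in the orthonormal eigenbasis v_1, ..., v_d of V_t, and write
  l = lambda_min (V_t), L = lambda_max (V_t), w = omega (V_t).  Each P_{t,i} has quadratic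
  form at most 2 |x|^2 and at least 2 (x . v_i)^2 / (sqrt l + 1)^2.  So lambda_max grows by at
  most 2 (d - 1) w, and at the new bottom eigenvector x, with b = (x . v_d)^2,
    lambda_min (V_{t+1}) >= (1 - b) (l + g) + b L >= min (l + g) L,   g = 2 w / (sqrt l + 1)^2.

  By induction keep l >= lambda_0 and k L <= l^2, where k = 2 / (3 (d - 1)), so that k L grows
  by at most (4/3) w.  If lambda_min gains g, then l^2 gains 2 l g >= (4/3) w because
  (sqrt l + 1)^2 <= 3 l for l >= 2.  Otherwise lambda_min reaches the old L, and
  L^2 - k L >= (4/3) C sqrt L >= (4/3) w follows from L >= lambda_0 >= sqrt k 2 d C + k.
*)

theory Submission
  imports Defs
begin

lemma sum_matrix_vector_mult:
  fixes A :: "'a \<Rightarrow> real^'n^'m"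
  shows "(\<Sum>i\<in>S. A i) *v x = (\<Sum>i\<in>S. A i *v x)"
  by (induct S rule: infinite_finite_induct) (auto simp: matrix_vector_mult_add_rdistrib)

lemma outer_mult_vec: "outer a *v x = (a \<bullet> x) *\<^sub>R a"
  by (simp add: vec_eq_iff outer_def matrix_vector_mult_def inner_vec_def sum_distrib_left
      mult.commute mult.left_commute)

lemma normalize_vec_eq_sgn: "normalize_vec x = sgn x"
  by (simp add: normalize_vec_def sgn_vec_def divide_inverse_commute)

lemma sum_split_last:
  fixes f :: "nat \<Rightarrow> 'a::comm_monoid_add"
  shows "1 \<le> n \<Longrightarrow> (\<Sum>i=1..n. f i) = (\<Sum>i=1..n - 1. f i) + f n"
  by (cases n) simp_all

lemma quadratic_form_add_scaled_sum:
  fixes A :: "real^'n^'n" and B :: "'a \<Rightarrow> real^'n^'n"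
  shows "x \<bullet> ((A + r *\<^sub>R (\<Sum>i\<in>S. B i)) *v x) = x \<bullet> (A *v x) + r * (\<Sum>i\<in>S. x \<bullet> (B i *v x))"
  by (simp add: matrix_vector_mult_add_rdistrib sum_matrix_vector_mult inner_add_right
      inner_sum_right flip: scaleR_matrix_vector_assoc)

lemma inner_sgn_sq_le: "(x \<bullet> sgn z)^2 \<le> (norm x)^2"
proof -
  have "\<bar>x \<bullet> sgn z\<bar> \<le> norm x"
    using Cauchy_Schwarz_ineq2[of x "sgn z"] by (cases "z = 0") (simp_all add: norm_sgn)
  then show ?thesis
    by (metis abs_ge_zero power2_abs power_mono)
qed

lemma inner_sgn_sq: "(x \<bullet> sgn z)^2 = (x \<bullet> z)^2 / (norm z)^2"
  by (simp add: sgn_div_norm field_simps)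

lemma inner_sgn_sq_ge:
  assumes "norm z \<le> b"
  shows "(x \<bullet> z)^2 / b^2 \<le> (x \<bullet> sgn z)^2"
proof (cases "z = 0")
  case False
  then have "0 < norm z"
    by simp
  moreover from this have "0 < b"
    using assms by linarith
  ultimately have "(x \<bullet> z)^2 / b^2 \<le> (x \<bullet> z)^2 / (norm z)^2"
    using assms by (intro divide_left_mono power_mono) auto
  then show ?thesis
    by (simp add: inner_sgn_sq)
qed simp

lemma Pmat_quadratic_form:
  "x \<bullet> (Pmat c l w *v x) =
    (x \<bullet> sgn (c + (1 / sqrt l) *\<^sub>R w))^2 + (x \<bullet> sgn (c - (1 / sqrt l) *\<^sub>R w))^2"
  by (simp add: Pmat_def normalize_vec_eq_sgn matrix_vector_mult_add_rdistrib outer_mult_vec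
      inner_add_right power2_eq_square inner_commute)

lemma Pmat_quadratic_form_le: "x \<bullet> (Pmat c l w *v x) \<le> 2 * (norm x)^2"
  unfolding Pmat_quadratic_form mult_2 by (intro add_mono inner_sgn_sq_le)

lemma Pmat_quadratic_form_ge:
  assumes c: "norm c = 1" and w: "norm w = 1" and l: "0 < l"
  shows "2 * (x \<bullet> w)^2 / (sqrt l + 1)^2 \<le> x \<bullet> (Pmat c l w *v x)"
proof -
  define s where "s = 1 / sqrt l"
  have "0 < s"
    using l by (simp add: s_def)
  have norms: "norm (c + s *\<^sub>R w) \<le> 1 + s" "norm (c - s *\<^sub>R w) \<le> 1 + s"
    using norm_triangle_ineq[of c "s *\<^sub>R w"] norm_triangle_ineq4[of c "s *\<^sub>R w"] c w \<open>0 < s\<close>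
    by simp_all
  have "2 * (x \<bullet> w)^2 / (sqrt l + 1)^2 = 2 * (s * (x \<bullet> w))^2 / (1 + s)^2"
    using l by (simp add: s_def power2_eq_square field_simps)
  also have "\<dots> \<le> ((x \<bullet> c + s * (x \<bullet> w))^2 + (x \<bullet> c - s * (x \<bullet> w))^2) / (1 + s)^2"
    by (intro divide_right_mono zero_le_power2) (simp add: power2_eq_square algebra_simps)
  also have "\<dots> = (x \<bullet> (c + s *\<^sub>R w))^2 / (1 + s)^2 + (x \<bullet> (c - s *\<^sub>R w))^2 / (1 + s)^2"
    by (simp add: inner_add_right inner_diff_right add_divide_distrib)
  also have "\<dots> \<le> x \<bullet> (Pmat c l w *v x)"
    unfolding Pmat_quadratic_form s_def[symmetric] by (intro add_mono inner_sgn_sq_ge norms)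
  finally show ?thesis .
qed

locale orthonormal_eigenbasis =
  fixes V :: "real^'n^'n" and v :: "nat \<Rightarrow> real^'n" and lam :: "nat \<Rightarrow> real"
  assumes orthonormal: "\<And>i j. i \<in> {1..CARD('n)} \<Longrightarrow> j \<in> {1..CARD('n)} \<Longrightarrow>
      v i \<bullet> v j = (if i = j then 1 else 0)"
    and eigenvector: "\<And>i. i \<in> {1..CARD('n)} \<Longrightarrow> V *v v i = lam i *\<^sub>R v i"
begin

lemma basis_nonzero: "i \<in> {1..CARD('n)} \<Longrightarrow> v i \<noteq> 0"
  using orthonormal[of i i] by auto

lemma basis_expansion: "x = (\<Sum>i=1..CARD('n). (x \<bullet> v i) *\<^sub>R v i)"
proof -
  let ?B = "v ` {1..CARD('n)}"
  have inj: "inj_on v {1..CARD('n)}"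
    by (rule inj_onI) (metis orthonormal zero_neq_one)
  have orth: "pairwise orthogonal ?B"
    by (auto simp: pairwise_def orthogonal_def orthonormal)
  have "independent ?B"
    by (intro pairwise_orthogonal_independent orth) (auto simp: basis_nonzero)
  moreover have "dim (UNIV :: (real^'n) set) \<le> card ?B"
    using inj by (simp add: card_image)
  ultimately have span: "x \<in> span ?B"
    using card_ge_dim_independent by blast
  have unit: "norm b = 1" if "b \<in> ?B" for b
    using that by (auto simp: norm_eq_sqrt_inner orthonormal)
  have "x = (\<Sum>b\<in>?B. (x \<bullet> b) *\<^sub>R b)"
    using orthonormal_basis_expand[OF orth unit span finite_imageI] by simp
  also have "\<dots> = (\<Sum>i=1..CARD('n). (x \<bullet> v i) *\<^sub>R v i)"
    using inj by (simp add: sum.reindex)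
  finally show ?thesis .
qed

lemma inner_basis_combination:
  assumes "j \<in> {1..CARD('n)}"
  shows "(\<Sum>i=1..CARD('n). f i *\<^sub>R v i) \<bullet> v j = f j"
proof -
  have "(\<Sum>i=1..CARD('n). f i *\<^sub>R v i) \<bullet> v j = (\<Sum>i=1..CARD('n). if i = j then f j else 0)"
    unfolding inner_sum_left using assms by (intro sum.cong) (auto simp: orthonormal)
  then show ?thesis
    using assms by simp
qed

lemma mult_vec_expansion: "V *v x = (\<Sum>i=1..CARD('n). (lam i * (x \<bullet> v i)) *\<^sub>R v i)"
proof -
  have "V *v x = (\<Sum>i=1..CARD('n). (x \<bullet> v i) *\<^sub>R (V *v v i))"
    by (subst basis_expansion[of x])
      (simp add: vec.sum matrix_scaleR_vector_ac flip: scaleR_matrix_vector_assoc)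
  then show ?thesis
    by (simp add: eigenvector mult.commute)
qed

lemma inner_mult_vec: "y \<bullet> (V *v x) = (\<Sum>i=1..CARD('n). lam i * (x \<bullet> v i) * (y \<bullet> v i))"
  by (simp add: mult_vec_expansion inner_sum_right)

lemma quadratic_form: "x \<bullet> (V *v x) = (\<Sum>i=1..CARD('n). lam i * (x \<bullet> v i)^2)"
  by (simp add: inner_mult_vec power2_eq_square mult.assoc)

lemma parseval: "x \<bullet> x = (\<Sum>i=1..CARD('n). (x \<bullet> v i)^2)"
  by (subst (2) basis_expansion[of x]) (simp add: inner_sum_right power2_eq_square)

lemma parseval_unit: "norm x = 1 \<Longrightarrow> (\<Sum>i=1..CARD('n). (x \<bullet> v i)^2) = 1"
  unfolding parseval[symmetric] by (simp add: norm_eq_1)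

lemma eigenvalue_eq_quadratic_form: "i \<in> {1..CARD('n)} \<Longrightarrow> lam i = v i \<bullet> (V *v v i)"
  by (simp add: eigenvector orthonormal)

lemma eigenvalue_of_scalar_matrix:
  assumes "V = a *\<^sub>R mat 1" and i: "i \<in> {1..CARD('n)}"
  shows "lam i = a"
  using eigenvalue_eq_quadratic_form[OF i] orthonormal[OF i i]
  by (simp add: assms(1) flip: scaleR_matrix_vector_assoc)

lemma symmetric: "transpose V = V"
proof -
  have "(transpose V *v x) \<bullet> y = (V *v x) \<bullet> y" for x y
  proof -
    have "(transpose V *v x) \<bullet> y = y \<bullet> (V *v x)"
      by (simp add: dot_lmul_matrix inner_mult_vec mult_ac)
    then show ?thesis
      by (simp add: inner_commute)
  qed
  then show ?thesis
    by (metis matrix_eq vector_eq_rdot)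
qed

lemma eigvals_eq: "eigvals V = lam ` {1..CARD('n)}"
proof
  show "lam ` {1..CARD('n)} \<subseteq> eigvals V"
    using basis_nonzero eigenvector by (fastforce simp: eigvals_def)
  show "eigvals V \<subseteq> lam ` {1..CARD('n)}"
  proof
    fix \<mu> assume "\<mu> \<in> eigvals V"
    then obtain y where y: "y \<noteq> 0" "V *v y = \<mu> *\<^sub>R y"
      unfolding eigvals_def by auto
    have "0 < y \<bullet> y"
      using y(1) by simp
    then have "(\<Sum>i=1..CARD('n). (y \<bullet> v i)^2) \<noteq> 0"
      by (simp only: parseval)
    then obtain j where j: "j \<in> {1..CARD('n)}" "(y \<bullet> v j)^2 \<noteq> 0"
      by (meson sum.neutral)
    have "\<mu> * (y \<bullet> v j) = (V *v y) \<bullet> v j"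
      using y by simp
    also have "\<dots> = lam j * (y \<bullet> v j)"
      unfolding mult_vec_expansion by (rule inner_basis_combination[OF j(1)])
    finally show "\<mu> \<in> lam ` {1..CARD('n)}"
      using j by simp
  qed
qed

end

locale sorted_eigenbasis = orthonormal_eigenbasis V v lam
  for V :: "real^'n^'n" and v lam +
  assumes sorted: "\<And>i j. i \<in> {1..CARD('n)} \<Longrightarrow> j \<in> {1..CARD('n)} \<Longrightarrow> i \<le> j \<Longrightarrow> lam i \<le> lam j"
begin

lemma lambda_min_eq: "lambda_min V = lam 1"
  unfolding lambda_min_def eigvals_eq by (rule Min_eqI) (auto intro: sorted)

lemma lambda_max_eq: "lambda_max V = lam CARD('n)"
  unfolding lambda_max_def eigvals_eq by (rule Max_eqI) (auto intro: sorted)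

lemma psd_if_lam_1_nonneg:
  assumes "0 \<le> lam 1"
  shows "psd V"
proof -
  have "0 \<le> lam i" if "i \<in> {1..CARD('n)}" for i
    using assms sorted[of 1 i] that by auto
  then show ?thesis
    by (auto simp: psd_def symmetric quadratic_form intro!: sum_nonneg)
qed

lemma update_quadratic_form_le:
  assumes x: "norm x = 1" and \<omega>: "0 \<le> \<omega>"
  shows "x \<bullet> ((V + \<omega> *\<^sub>R (\<Sum>i=1..CARD('n) - 1. Pmat c (lam 1) (v i))) *v x)
    \<le> lam CARD('n) + 2 * (real CARD('n) - 1) * \<omega>"
proof -
  have "x \<bullet> (V *v x) \<le> (\<Sum>i=1..CARD('n). lam CARD('n) * (x \<bullet> v i)^2)"
    unfolding quadratic_form by (intro sum_mono mult_right_mono) (auto intro: sorted)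
  also have "\<dots> = lam CARD('n)"
    using parseval_unit[OF x] by (simp flip: sum_distrib_left)
  finally have "x \<bullet> (V *v x) \<le> lam CARD('n)" .
  moreover have "(\<Sum>i=1..CARD('n) - 1. x \<bullet> (Pmat c (lam 1) (v i) *v x)) \<le> 2 * (real CARD('n) - 1)"
    using sum_mono[of "{1..CARD('n) - 1}" "\<lambda>i. x \<bullet> (Pmat c (lam 1) (v i) *v x)" "\<lambda>_. 2"]
      Pmat_quadratic_form_le[of x] x by (simp add: of_nat_diff)
  ultimately show ?thesis
    using \<omega> by (simp add: quadratic_form_add_scaled_sum mult_left_mono mult.commute add_mono)
qed

lemma update_quadratic_form_ge:
  assumes x: "norm x = 1" and c: "norm c = 1" and \<omega>: "0 \<le> \<omega>" and l: "0 < lam 1"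
  shows "min (lam 1 + 2 * \<omega> / (sqrt (lam 1) + 1)^2) (lam CARD('n))
    \<le> x \<bullet> ((V + \<omega> *\<^sub>R (\<Sum>i=1..CARD('n) - 1. Pmat c (lam 1) (v i))) *v x)"
proof -
  let ?d = "CARD('n)" and ?g = "2 * \<omega> / (sqrt (lam 1) + 1)^2"
  define a where "a i = (x \<bullet> v i)^2" for i
  define R where "R = (\<Sum>i=1..?d - 1. a i)"
  have d: "1 \<le> ?d"
    by (simp add: Suc_leI)
  have R: "R + a ?d = 1" "0 \<le> R" "0 \<le> a ?d"
    using parseval_unit[OF x] sum_split_last[OF d, of a]
    by (simp_all add: R_def a_def sum_nonneg)
  have "lam 1 * R + lam ?d * a ?d \<le> (\<Sum>i=1..?d - 1. lam i * a i) + lam ?d * a ?d"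
    unfolding R_def sum_distrib_left
    by (intro add_right_mono sum_mono mult_right_mono) (auto simp: a_def intro: sorted)
  also have "\<dots> = x \<bullet> (V *v x)"
    using sum_split_last[OF d, of "\<lambda>i. lam i * a i"] by (simp add: quadratic_form a_def)
  finally have V: "lam 1 * R + lam ?d * a ?d \<le> x \<bullet> (V *v x)" .
  have "2 / (sqrt (lam 1) + 1)^2 * R = (\<Sum>i=1..?d - 1. 2 * (x \<bullet> v i)^2 / (sqrt (lam 1) + 1)^2)"
    by (simp add: R_def a_def sum_distrib_left)
  also have "\<dots> \<le> (\<Sum>i=1..?d - 1. x \<bullet> (Pmat c (lam 1) (v i) *v x))"
    using c l by (intro sum_mono Pmat_quadratic_form_ge) (auto simp: norm_eq_sqrt_inner orthonormal)
  finally have "\<omega> * (2 / (sqrt (lam 1) + 1)^2 * R)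
      \<le> \<omega> * (\<Sum>i=1..?d - 1. x \<bullet> (Pmat c (lam 1) (v i) *v x))"
    using \<omega> by (rule mult_left_mono)
  then have P: "?g * R \<le> \<omega> * (\<Sum>i=1..?d - 1. x \<bullet> (Pmat c (lam 1) (v i) *v x))"
    by (simp add: mult_ac)
  let ?m = "min (lam 1 + ?g) (lam ?d)"
  have "?m = ?m * R + ?m * a ?d"
    using R(1) by (simp flip: distrib_left)
  also have "\<dots> \<le> (lam 1 + ?g) * R + lam ?d * a ?d"
    using R by (intro add_mono mult_right_mono) auto
  also have "\<dots> \<le> x \<bullet> ((V + \<omega> *\<^sub>R (\<Sum>i=1..?d - 1. Pmat c (lam 1) (v i))) *v x)"
    using V P by (simp add: quadratic_form_add_scaled_sum distrib_right)
  finally show ?thesis .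
qed


lemma update_eigenvalue_bounds:
  assumes "orthonormal_eigenbasis V' u mu"
    and V': "V' = V + \<omega> *\<^sub>R (\<Sum>i=1..CARD('n) - 1. Pmat c (lam 1) (v i))"
    and c: "norm c = 1" and \<omega>: "0 \<le> \<omega>" and l: "0 < lam 1"
  shows "mu CARD('n) \<le> lam CARD('n) + 2 * (real CARD('n) - 1) * \<omega>"
    and "min (lam 1 + 2 * \<omega> / (sqrt (lam 1) + 1)^2) (lam CARD('n)) \<le> mu 1"
proof -
  interpret V': orthonormal_eigenbasis V' u mu by fact
  have unit: "norm (u i) = 1" if "i \<in> {1..CARD('n)}" for i
    using that by (simp add: norm_eq_1 V'.orthonormal)
  show "mu CARD('n) \<le> lam CARD('n) + 2 * (real CARD('n) - 1) * \<omega>"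
    using update_quadratic_form_le[OF unit \<omega>] V'.eigenvalue_eq_quadratic_form
    by (simp add: V' Suc_leI)
  show "min (lam 1 + 2 * \<omega> / (sqrt (lam 1) + 1)^2) (lam CARD('n)) \<le> mu 1"
    using update_quadratic_form_ge[OF unit c \<omega> l] V'.eigenvalue_eq_quadratic_form
    by (simp add: V' Suc_leI)
qed

end

lemma sqrt_add_one_sq_le:
  fixes l :: real
  assumes "2 \<le> l"
  shows "(sqrt l + 1)^2 \<le> 3 * l"
proof -
  have "3 * l - (sqrt l + 1)^2 = (sqrt l - 1)^2 + (l - 2)"
    using assms by (simp add: power2_eq_square algebra_simps)
  moreover have "0 \<le> (sqrt l - 1)^2 + (l - 2)"
    using assms by simp
  ultimately show ?thesis
    by linarith
qed

lemma eigenvalue_bounds_step: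
  fixes d k l0 C l L \<omega> l' L' :: real
  assumes d: "2 \<le> d" and k: "k = 2 / (3 * (d - 1))"
    and l0: "2 \<le> l0" "sqrt k * (2 * d * C) + k \<le> l0" and C: "0 \<le> C"
    and l: "l0 \<le> l" "l \<le> L" "k * L \<le> l^2"
    and \<omega>: "0 \<le> \<omega>" "\<omega> \<le> C * sqrt L"
    and l': "min (l + 2 * \<omega> / (sqrt l + 1)^2) L \<le> l'"
    and L': "L' \<le> L + 2 * (d - 1) * \<omega>"
  shows "l0 \<le> l' \<and> k * L' \<le> l'^2"
proof -
  define g where "g = 2 * \<omega> / (sqrt l + 1)^2"
  have "0 \<le> g"
    using \<omega> by (simp add: g_def)
  have "0 < k" "k \<le> 1"
    using d by (simp_all add: k field_simps)
  have k_d: "k * (2 * (d - 1)) = 4 / 3"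
    using d by (simp add: k field_simps)
  have "k * L' \<le> k * (L + 2 * (d - 1) * \<omega>)"
    using L' \<open>0 < k\<close> by (simp add: mult_left_mono)
  also have "\<dots> = k * L + 4 / 3 * \<omega>"
    by (simp add: distrib_left flip: k_d mult.assoc)
  finally have kL': "k * L' \<le> k * L + 4 / 3 * \<omega>" .
  have "l \<le> l'"
    using l' l \<open>0 \<le> g\<close> by (simp add: g_def)
  moreover have "k * L' \<le> l'^2"
  proof (cases "l + g \<le> L")
    case True
    then have "l + g \<le> l'"
      using l' by (simp add: g_def)
    have "(sqrt l + 1)^2 \<le> 3 * l"
      using l l0 by (intro sqrt_add_one_sq_le) linarith
    then have "\<omega> * (sqrt l + 1)^2 \<le> \<omega> * (3 * l)"
      using \<omega> by (intro mult_left_mono)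
    moreover have "0 < sqrt l + 1"
      using l l0 by (simp add: add_nonneg_pos)
    ultimately have "4 / 3 * \<omega> \<le> 2 * l * g"
      by (simp add: g_def field_simps)
    then have "k * L' \<le> l^2 + 2 * l * g"
      using kL' l by linarith
    also have "\<dots> \<le> (l + g)^2"
      using \<open>0 \<le> g\<close> by (simp add: power2_eq_square algebra_simps)
    also have "\<dots> \<le> l'^2"
      using \<open>l + g \<le> l'\<close> \<open>0 \<le> g\<close> l l0 by (intro power_mono) auto
    finally show ?thesis .
  next
    case False
    then have "L \<le> l'"
      using l' by (simp add: g_def)
    have "1 \<le> L"
      using l l0 by linarith
    have "sqrt k * sqrt L \<le> 1 * sqrt L"
      using \<open>k \<le> 1\<close> \<open>1 \<le> L\<close> by (intro mult_right_mono) auto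
    also have "\<dots> \<le> sqrt L * sqrt L"
      using \<open>1 \<le> L\<close> by (intro mult_right_mono) auto
    finally have "sqrt k * sqrt L \<le> L"
      using \<open>1 \<le> L\<close> by simp
    have "4 / 3 * \<omega> = k * (2 * (d - 1)) * \<omega>"
      by (simp only: k_d)
    also have "\<dots> \<le> k * (2 * d) * (C * sqrt L)"
      using \<omega> \<open>0 < k\<close> d by (intro mult_mono) auto
    also have "\<dots> = sqrt k * (2 * d * C) * (sqrt k * sqrt L)"
      using \<open>0 < k\<close> by (simp add: algebra_simps flip: power2_eq_square)
    also have "\<dots> \<le> sqrt k * (2 * d * C) * L"
      using \<open>sqrt k * sqrt L \<le> L\<close> d C \<open>0 < k\<close> by (intro mult_left_mono) auto
    also have "\<dots> \<le> (L - k) * L"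
      using l l0 \<open>1 \<le> L\<close> by (intro mult_right_mono) auto
    finally have "k * L' \<le> L^2"
      using kL' by (simp add: power2_eq_square algebra_simps)
    also have "\<dots> \<le> l'^2"
      using \<open>L \<le> l'\<close> \<open>1 \<le> L\<close> by (intro power_mono) auto
    finally show ?thesis .
  qed
  ultimately show ?thesis
    using l by linarith
qed

theorem mainTheorem3:
  fixes c :: "nat \<Rightarrow> real^'n"
    and w :: "real^'n^'n \<Rightarrow> real"
    and C lam0v :: real
    and V :: "nat \<Rightarrow> real^'n^'n"
    and lam :: "nat \<Rightarrow> nat \<Rightarrow> real"
    and v :: "nat \<Rightarrow> nat \<Rightarrow> real^'n"
  assumes d2: "CARD('n) \<ge> 2"
    and unit: "\<forall>t. norm (c t) = 1"
    and Cpos: "C > 0"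
    and omega: "\<forall>X. psd X \<longrightarrow> 0 \<le> w X \<and> w X \<le> C * sqrt (lambda_max X)"
    and lam0: "lam0v \<ge> max 2 (sqrt (2 / (3 * (real CARD('n) - 1))) * (2 * real CARD('n) * C)
                               + 2 / (3 * (real CARD('n) - 1)))"
    and V0: "V 0 = lam0v *\<^sub>R mat 1"
    and eig: "\<forall>t. \<forall>i\<in>{1..CARD('n)}. V t *v v t i = lam t i *\<^sub>R v t i"
    and orth: "\<forall>t. \<forall>i\<in>{1..CARD('n)}. \<forall>j\<in>{1..CARD('n)}.
                  v t i \<bullet> v t j = (if i = j then 1 else 0)"
    and sorted: "\<forall>t. \<forall>i\<in>{1..CARD('n)}. \<forall>j\<in>{1..CARD('n)}. i \<le> j \<longrightarrow> lam t i \<le> lam t j"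
    and step: "\<forall>t. V (Suc t) = V t + w (V t) *\<^sub>R (\<Sum>i=1..CARD('n) - 1. Pmat (c t) (lam t 1) (v t i))"
  shows "\<forall>t. lambda_min (V t) \<ge> sqrt (2 / (3 * (real CARD('n) - 1)) * lambda_max (V t))"
proof -
  define k where "k = 2 / (3 * (real CARD('n) - 1))"
  have basis: "sorted_eigenbasis (V t) (v t) (lam t)" for t
    using eig orth sorted by unfold_locales blast+
  note eigenbasis = sorted_eigenbasis.axioms(1)[OF basis]
  have d: "2 \<le> real CARD('n)"
    using d2 by simp
  have l0: "2 \<le> lam0v" "sqrt k * (2 * real CARD('n) * C) + k \<le> lam0v"
    using lam0 by (simp_all add: k_def)
  have bounds: "lam0v \<le> lam t 1 \<and> k * lam t CARD('n) \<le> (lam t 1)^2" for t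
  proof (induction t)
    case 0
    have "k \<le> 1"
      using d by (simp add: k_def field_simps)
    then show ?case
      using l0 orthonormal_eigenbasis.eigenvalue_of_scalar_matrix[OF eigenbasis V0]
      by (simp add: Suc_leI power2_eq_square mult_right_mono)
  next
    case (Suc t)
    interpret Vt: sorted_eigenbasis "V t" "v t" "lam t" by (rule basis)
    have "0 < lam t 1"
      using Suc l0 by linarith
    then have \<omega>: "0 \<le> w (V t)" "w (V t) \<le> C * sqrt (lam t CARD('n))"
      using omega Vt.psd_if_lam_1_nonneg Vt.lambda_max_eq by auto
    note step_bounds = Vt.update_eigenvalue_bounds[OF eigenbasis
        spec[OF step] spec[OF unit] \<omega>(1) \<open>0 < lam t 1\<close>]
    have "lam t 1 \<le> lam t CARD('n)"
      by (simp add: Vt.sorted Suc_leI)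
    then show ?case
      using eigenvalue_bounds_step[OF d k_def l0 _ _ _ _ \<omega> step_bounds(2,1)] Cpos Suc by simp
  qed
  have "sqrt (k * lambda_max (V t)) \<le> lambda_min (V t)" for t
    using bounds[of t] l0 sorted_eigenbasis.lambda_min_eq[OF basis]
      sorted_eigenbasis.lambda_max_eq[OF basis]
    by (simp add: real_le_lsqrt)
  then show ?thesis
    by (simp add: k_def)
qed

end
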